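(* Let $n$ be a positive integer and let $x\neq y$ be integers with $0\le x,y\le n$. If there is a cracked graceful permutation of length $n$ with first element $x$ and last element $y$, then $|x-y|\equiv \lfloor n/2\rfloor \pmod 2$.
   Context: A cracked graceful permutation of length $n$ is an arrangement $(a_1,\dots,a_n)$ of $n$ distinct integers from $\{0,1,\dots,n\}$ such that its absolute differences $|a_{i+1}-a_i|$ ($1\le i\le n-1$) are exactly the integers $\{1,\dots,n-1\}$. *)

theory Defs
  imports Main
begin

definition cracked_graceful :: "nat \<Rightarrow> int list \<Rightarrow> bool" where
  "cracked_graceful n a \<longleftrightarrow>
     length a = n \<and> distinct a \<and> set a \<subseteq> {0..int n} \<and>
     {\<bar>a ! (i+1) - a ! i\<bar> | i. i + 1 < n} = {1..int n - 1}"

end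

theory Submission imports Defs begin

text \<open>The differences of a cracked graceful permutation of length \<open>n\<close> are
  \<open>1, \<dots>, n - 1\<close>, so their absolute values sum to \<open>n(n-1)/2\<close>.  Since \<open>\<bar>d\<bar> \<equiv> d (mod 2)\<close>,
  this sum has the parity of the telescoping sum of the signed differences, which is
  \<open>a\<^sub>n - a\<^sub>1\<close>; and \<open>n(n-1)/2 \<equiv> \<lfloor>n/2\<rfloor> (mod 2)\<close>.\<close>

lemma sum_abs_diff_mod_2:
  fixes f :: "nat \<Rightarrow> int"
  shows "(\<Sum>i<m. \<bar>f (Suc i) - f i\<bar>) mod 2 = (f m - f 0) mod 2"
proof -
  have "2 dvd (\<Sum>i<m. \<bar>f (Suc i) - f i\<bar> - (f (Suc i) - f i))"
    by (rule dvd_sum) (auto simp: abs_if)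
  then have "(\<Sum>i<m. \<bar>f (Suc i) - f i\<bar>) mod 2 = (\<Sum>i<m. f (Suc i) - f i) mod 2"
    by (simp add: sum_subtractf mod_eq_dvd_iff)
  then show ?thesis
    by (simp add: sum_lessThan_telescope)
qed

lemma triangular_number_mod_2:
  "(int m * (int m + 1) div 2) mod 2 = int (Suc m div 2) mod 2"
proof (cases "even (Suc m)")
  case True
  then obtain k where k: "Suc m = 2 * k" by blast
  then have m: "int m = 2 * int k - 1" by linarith
  have "int m * (int m + 1) div 2 = int k + 2 * (int k * int k - int k)"
    unfolding m by (simp add: algebra_simps)
  moreover have "Suc m div 2 = k" using k by simp
  ultimately show ?thesis by (metis mod_mult_self2 mult.commute)
next
  case False
  then obtain k where k: "Suc m = 2 * k + 1" using oddE by blast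
  then have m: "int m = 2 * int k" by linarith
  have "int m * (int m + 1) div 2 = int k + 2 * (int k * int k)"
    unfolding m by (simp add: algebra_simps)
  moreover have "Suc m div 2 = k" using k by simp
  ultimately show ?thesis by simp
qed

lemma sum_atLeastAtMost_1_int: "(\<Sum>v\<in>{1..int m}. v) = int m * (int m + 1) div 2"
proof -
  have "(\<Sum>v\<in>{1..int m}. v) = (\<Sum>i\<in>{Suc 0..m}. int i)"
    using sum.reindex [of int "{Suc 0..m}" "\<lambda>v. v"] image_int_atLeastAtMost [of "Suc 0" m]
    by simp
  then show ?thesis by (simp add: gauss_sum_from_Suc_0)
qed

lemma cracked_graceful_sum_abs_diff:
  assumes "cracked_graceful (Suc m) a"
  shows "(\<Sum>i<m. \<bar>a ! Suc i - a ! i\<bar>) = int m * (int m + 1) div 2"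
proof -
  define d where "d i = \<bar>a ! Suc i - a ! i\<bar>" for i
  have image_d: "d ` {..<m} = {1..int m}"
    using assms unfolding cracked_graceful_def d_def by (auto simp: image_def)
  then have "inj_on d {..<m}"
    by (simp add: eq_card_imp_inj_on)
  then have "(\<Sum>i<m. d i) = (\<Sum>v\<in>{1..int m}. v)"
    using sum.reindex [of d "{..<m}" "\<lambda>v. v"] image_d by simp
  then show ?thesis
    by (simp add: d_def sum_atLeastAtMost_1_int)
qed

theorem lemma5p11:
  fixes n :: nat and x y :: int
  assumes "n > 0" and "x \<noteq> y" and "0 \<le> x" and "x \<le> int n" and "0 \<le> y" and "y \<le> int n"
    and "\<exists>a. cracked_graceful n a \<and> hd a = x \<and> last a = y"
  shows "\<bar>x - y\<bar> mod 2 = int (n div 2) mod 2"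
proof -
  obtain m where n: "n = Suc m" using \<open>n > 0\<close> gr0_implies_Suc by blast
  obtain a where cg: "cracked_graceful n a" and "hd a = x" and "last a = y"
    using assms(7) by blast
  moreover have "length a = Suc m"
    using cg n by (simp add: cracked_graceful_def)
  moreover from this have "a \<noteq> []" by auto
  ultimately have ends: "x = a ! 0" "y = a ! m"
    by (simp_all add: hd_conv_nth last_conv_nth)
  have "(y - x) mod 2 = (int m * (int m + 1) div 2) mod 2"
    using sum_abs_diff_mod_2 [of "\<lambda>i. a ! i" m] cracked_graceful_sum_abs_diff [of m a] cg n ends
    by simp
  moreover have "\<bar>x - y\<bar> mod 2 = (y - x) mod 2"
    by (auto simp: abs_if mod_eq_dvd_iff)
  ultimately show ?thesis
    using triangular_number_mod_2 [of m] n by simp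
qed

end
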